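(* Let $d\ge1$ and $-1\le a<b<1$ with $a+b\ge 0$, and suppose \[ n=\frac{d\left(\left(\frac{a+b-2}{b-a}\right)^2-1\right)}{\left(\frac{a+b-2}{b-a}\right)^2-d} \] is an integer. If there exists a set of $n$ unit vectors in $\mathbb{R}^d$ such that the inner product of any two distinct ones lies in $\{a,b\}$, then there exists an equiangular tight frame consisting of $n$ vectors in $\mathbb{R}^d$.
   Context: An equiangular tight frame of $m$ vectors in $\mathbb{R}^k$ is a family of unit vectors $f_1,\dots,f_m\in\mathbb{R}^k$ such that $|\langle f_i,f_j\rangle|$ takes the same value for all $i\neq j$, and there is a constant $C>0$ with $\sum_{i=1}^m\langle x,f_i\rangle^2=C\|x\|^2$ for all $x\in\mathbb{R}^k$. *)

theory Defs
  imports "HOL-Analysis.Analysis"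
begin

definition equiangular_tight_frame :: "(nat \<Rightarrow> real ^ 'd) \<Rightarrow> nat \<Rightarrow> bool" where
  "equiangular_tight_frame f m \<longleftrightarrow>
     (\<forall>i<m. norm (f i) = 1) \<and>
     (\<exists>c. \<forall>i<m. \<forall>j<m. i \<noteq> j \<longrightarrow> \<bar>f i \<bullet> f j\<bar> = c) \<and>
     (\<exists>C>0. \<forall>x. (\<Sum>i<m. (x \<bullet> f i)^2) = C * (norm x)^2)"

end

(*
  Put c = (a + b) / 2 and \<delta> = (b - a) / 2, so that the Gram matrix G of the vectors x_i has
  unit diagonal and off-diagonal entries c \<plusminus> \<delta>. The hypothesis on n says precisely that
  |G - c J|^2 = n (1 - c)^2 + n (n - 1) \<delta>^2 equals n^2 (1 - c)^2 / d (Frobenius norms).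
  With u = \<Sum> x_i, U = |u|^2 (positive when c > 0, as u = 0 would make |G - c J| too large),
  k = n (1 - c) / d, \<gamma> U = c n and F = \<Sum> x_i x_i^T the frame operator,
  |G - c J|^2 - n^2 (1 - c)^2 / d = |F - \<gamma> u u^T - k I|^2 + 2 \<gamma> \<Sum>_i (x_i \<bullet> u - U / n)^2,
  so equality forces F = \<gamma> u u^T + k I and x_i \<bullet> u = U / n. Then the shifted vectors x_i - s u,
  with 2 s - n s^2 = \<gamma>, have Gram matrix G - c J and frame operator k I, and rescaling them by
  1 / sqrt (1 - c) gives an equiangular tight frame.
*)

theory Submission
  imports Defs
begin

text \<open>On real ^ 'n ^ 'n the inner product is the Frobenius inner product of matrices,
  so the frame operator can be handled by inner-product algebra alone.\<close>

definition outer :: "real ^ 'm \<Rightarrow> real ^ 'n \<Rightarrow> real ^ 'n ^ 'm" where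
  "outer a b = (\<chi> i j. a $ i * b $ j)"

lemma inner_outer_outer: "outer a b \<bullet> outer c d = (a \<bullet> c) * (b \<bullet> d)"
proof -
  have "outer a b \<bullet> outer c d = (\<Sum>i\<in>UNIV. \<Sum>j\<in>UNIV. (a $ i * c $ i) * (b $ j * d $ j))"
    by (simp add: outer_def inner_vec_def mult_ac)
  then show ?thesis by (simp add: inner_vec_def sum_product)
qed

lemma inner_outer_mat: "outer a b \<bullet> mat 1 = a \<bullet> (b :: real ^ 'n)"
proof -
  have "outer a b \<bullet> mat 1 = (\<Sum>i\<in>UNIV. \<Sum>j\<in>UNIV. if i = j then a $ i * b $ j else 0)"
    by (simp add: outer_def mat_def inner_vec_def if_distrib[of "\<lambda>x. _ * x"] cong: if_cong)
  then show ?thesis by (simp add: inner_vec_def)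
qed

lemma inner_mat_mat: "(mat 1 :: real ^ 'n ^ 'n) \<bullet> mat 1 = CARD('n)"
  by (simp add: mat_def inner_vec_def if_distrib cong: if_cong)

definition frame_operator :: "(nat \<Rightarrow> real ^ 'n) \<Rightarrow> nat \<Rightarrow> real ^ 'n ^ 'n" where
  "frame_operator v n = (\<Sum>i<n. outer (v i) (v i))"

lemma inner_frame_operator_outer:
  "frame_operator v n \<bullet> outer a b = (\<Sum>i<n. (v i \<bullet> a) * (v i \<bullet> b))"
  by (simp add: frame_operator_def inner_sum_left inner_outer_outer)

lemma inner_frame_operator_mat: "frame_operator v n \<bullet> mat 1 = (\<Sum>i<n. v i \<bullet> v i)"
  by (simp add: frame_operator_def inner_sum_left inner_outer_mat)

lemma inner_frame_operator_self:
  "frame_operator v n \<bullet> frame_operator v n = (\<Sum>i<n. \<Sum>j<n. (v i \<bullet> v j)^2)"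
  by (simp add: frame_operator_def inner_sum_left inner_sum_right inner_outer_outer
      power2_eq_square inner_commute)

lemma sum_inner_sq_eq_if_frame_operator_eq:
  assumes "frame_operator v n = g *\<^sub>R outer w w + k *\<^sub>R mat 1"
  shows "(\<Sum>i<n. (y \<bullet> v i)^2) = g * (w \<bullet> y)^2 + k * (y \<bullet> y)"
proof -
  have "frame_operator v n \<bullet> outer y y = (g *\<^sub>R outer w w + k *\<^sub>R mat 1) \<bullet> outer y y"
    by (simp only: assms)
  moreover have "(\<Sum>i<n. (y \<bullet> v i)^2) = frame_operator v n \<bullet> outer y y"
    by (simp add: inner_frame_operator_outer power2_eq_square inner_commute)
  ultimately show ?thesis
    by (simp add: inner_add_left inner_outer_outer power2_eq_square inner_commute[of "mat 1"]
        inner_outer_mat)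
qed

lemma inner_diff_scaleR_sq:
  fixes A B C :: "'a :: real_inner"
  shows "(A - g *\<^sub>R B - k *\<^sub>R C) \<bullet> (A - g *\<^sub>R B - k *\<^sub>R C)
    = A \<bullet> A - 2*g*(A \<bullet> B) - 2*k*(A \<bullet> C) + g^2*(B \<bullet> B) + 2*g*k*(B \<bullet> C) + k^2*(C \<bullet> C)"
  by (simp add: inner_diff_left inner_diff_right inner_commute algebra_simps power2_eq_square)

lemma norm_frame_operator_deviation_sq:
  fixes v :: "nat \<Rightarrow> real ^ 'n"
  shows "norm (frame_operator v n - g *\<^sub>R outer w w - k *\<^sub>R mat 1)^2
    = (\<Sum>i<n. \<Sum>j<n. (v i \<bullet> v j)^2) - 2*g*(\<Sum>i<n. (v i \<bullet> w)^2) + g^2*(w \<bullet> w)^2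
      - 2*k*(\<Sum>i<n. v i \<bullet> v i) + 2*g*k*(w \<bullet> w) + k^2 * CARD('n)"
  unfolding power2_norm_eq_inner inner_diff_scaleR_sq
  by (simp add: inner_frame_operator_self
      inner_frame_operator_outer inner_frame_operator_mat inner_outer_outer inner_outer_mat
      inner_mat_mat power2_eq_square)

lemma sum_gram_shift_sq:
  fixes x :: "nat \<Rightarrow> 'a :: real_inner" and n :: nat and c :: real
  defines "u \<equiv> sum x {..<n}"
  shows "(\<Sum>i<n. \<Sum>j<n. (x i \<bullet> x j - c)^2)
    = (\<Sum>i<n. \<Sum>j<n. (x i \<bullet> x j)^2) - 2*c*(u \<bullet> u) + c^2 * (real n)^2"
proof -
  have "(\<Sum>i<n. \<Sum>j<n. x i \<bullet> x j) = u \<bullet> u"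
    unfolding u_def inner_sum_left inner_sum_right by (rule sum.swap)
  moreover have "(\<Sum>i<n. \<Sum>j<n. (x i \<bullet> x j - c)^2)
      = (\<Sum>i<n. \<Sum>j<n. (x i \<bullet> x j)^2 - 2*c*(x i \<bullet> x j) + c^2)"
    by (simp add: power2_eq_square algebra_simps)
  ultimately show ?thesis
    by (simp add: sum.distrib sum_subtractf power2_eq_square flip: sum_distrib_left)
qed

lemma sum_inner_deviation_sq:
  fixes x :: "nat \<Rightarrow> 'a :: real_inner" and n :: nat
  defines "u \<equiv> sum x {..<n}"
  assumes "n > 0"
  shows "(\<Sum>i<n. (x i \<bullet> u - (u \<bullet> u) / n)^2) = (\<Sum>i<n. (x i \<bullet> u)^2) - (u \<bullet> u)^2 / n"
proof -
  have "(\<Sum>i<n. (x i \<bullet> u - (u \<bullet> u) / n)^2)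
      = (\<Sum>i<n. (x i \<bullet> u)^2 - 2 * ((u \<bullet> u) / n) * (x i \<bullet> u) + ((u \<bullet> u) / n)^2)"
    by (simp add: power2_eq_square algebra_simps)
  also have "\<dots> = (\<Sum>i<n. (x i \<bullet> u)^2) - 2 * ((u \<bullet> u) / n) * (\<Sum>i<n. x i \<bullet> u)
      + n * ((u \<bullet> u) / n)^2"
    by (simp add: sum.distrib sum_subtractf sum_distrib_left)
  also have "(\<Sum>i<n. x i \<bullet> u) = u \<bullet> u"
    by (simp add: u_def inner_sum_left)
  finally show ?thesis
    using assms(2) by (simp add: power2_eq_square)
qed

lemma sum_gram_shift_sq_decomposition:
  fixes x :: "nat \<Rightarrow> real ^ 'd" and n :: nat and c \<gamma> :: real
  defines "u \<equiv> sum x {..<n}" and "k \<equiv> n * (1 - c) / CARD('d)"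
  assumes unit: "\<forall>i<n. x i \<bullet> x i = 1" and "n > 0" and \<gamma>: "\<gamma> * (u \<bullet> u) = c * n"
  shows "(\<Sum>i<n. \<Sum>j<n. (x i \<bullet> x j - c)^2) - (n * (1 - c))^2 / CARD('d)
    = norm (frame_operator x n - \<gamma> *\<^sub>R outer u u - k *\<^sub>R mat 1)^2
      + 2 * \<gamma> * (\<Sum>i<n. (x i \<bullet> u - (u \<bullet> u) / n)^2)"
proof -
  let ?d = "real CARD('d)" and ?G = "\<Sum>i<n. \<Sum>j<n. (x i \<bullet> x j)^2"
  have "(\<Sum>i<n. x i \<bullet> x i) = n"
    using unit by simp
  then have "norm (frame_operator x n - \<gamma> *\<^sub>R outer u u - k *\<^sub>R mat 1)^2
      + 2 * \<gamma> * (\<Sum>i<n. (x i \<bullet> u - (u \<bullet> u) / n)^2)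
      = ?G + (\<gamma> * (u \<bullet> u))^2 - 2 * k * n + 2 * k * (\<gamma> * (u \<bullet> u)) + k^2 * ?d
        - 2 * (\<gamma> * (u \<bullet> u)) * (u \<bullet> u) / n"
    unfolding norm_frame_operator_deviation_sq
      sum_inner_deviation_sq[OF \<open>n > 0\<close>, where x=x, folded u_def]
    by (simp add: algebra_simps power2_eq_square)
  also have "\<dots> = ?G - 2 * c * (u \<bullet> u) + c^2 * n^2 - (n * (1 - c))^2 / ?d"
    unfolding \<gamma> k_def using \<open>n > 0\<close> by (simp add: power2_eq_square field_simps)
  finally show ?thesis
    by (simp add: sum_gram_shift_sq[where x=x and n=n and c=c, folded u_def])
qed

lemma sum_gram_shift_sq_gt_if_sum_eq_0:
  fixes x :: "nat \<Rightarrow> real ^ 'd" and n :: nat and c :: real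
  assumes unit: "\<forall>i<n. x i \<bullet> x i = 1" and "n > 0" and "0 < c" and "c < 1"
    and "sum x {..<n} = 0"
  shows "(n * (1 - c))^2 / CARD('d) < (\<Sum>i<n. \<Sum>j<n. (x i \<bullet> x j - c)^2)"
proof -
  let ?d = "real CARD('d)" and ?G = "\<Sum>i<n. \<Sum>j<n. (x i \<bullet> x j)^2"
  define k where "k = n * (1 - c) / ?d"
  have "0 \<le> norm (frame_operator x n - 0 *\<^sub>R outer 0 0 - k *\<^sub>R mat 1)^2"
    by (rule zero_le_power2)
  also have "\<dots> = ?G - 2 * k * n + k^2 * ?d"
    using unit norm_frame_operator_deviation_sq[of x n 0 0 k] by simp
  finally have "0 \<le> ?G - 2 * k * n + k^2 * ?d" .
  moreover have "2 * k * n - 2 * k^2 * ?d = 2 * (real n)^2 * c * (1 - c) / ?d"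
    by (simp add: k_def power2_eq_square field_simps)
  moreover have "0 < 2 * (real n)^2 * c * (1 - c) / ?d + c^2 * (real n)^2"
    using assms(2-4) by (intro add_pos_pos divide_pos_pos) simp_all
  moreover have "(\<Sum>i<n. \<Sum>j<n. (x i \<bullet> x j - c)^2) = ?G + c^2 * (real n)^2"
    using assms(5) by (simp add: sum_gram_shift_sq)
  moreover have "k^2 * ?d = (n * (1 - c))^2 / ?d"
    by (simp add: k_def power2_eq_square)
  ultimately show ?thesis
    by linarith
qed

lemma frame_operator_eq_if_sum_gram_shift_sq_eq:
  fixes x :: "nat \<Rightarrow> real ^ 'd" and n :: nat and c \<gamma> :: real
  defines "u \<equiv> sum x {..<n}" and "k \<equiv> n * (1 - c) / CARD('d)"
  assumes unit: "\<forall>i<n. x i \<bullet> x i = 1" and "n > 0" and "0 \<le> \<gamma>" and "\<gamma> * (u \<bullet> u) = c * n"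
    and "(\<Sum>i<n. \<Sum>j<n. (x i \<bullet> x j - c)^2) = (n * (1 - c))^2 / CARD('d)"
  shows "frame_operator x n = \<gamma> *\<^sub>R outer u u + k *\<^sub>R mat 1"
    and "\<gamma> \<noteq> 0 \<Longrightarrow> \<forall>i<n. x i \<bullet> u = (u \<bullet> u) / n"
proof -
  define D where "D = (\<Sum>i<n. (x i \<bullet> u - (u \<bullet> u) / n)^2)"
  define M where "M = frame_operator x n - \<gamma> *\<^sub>R outer u u - k *\<^sub>R mat 1"
  have "norm M ^ 2 + 2 * \<gamma> * D = 0"
    using sum_gram_shift_sq_decomposition[OF unit \<open>n > 0\<close>, of \<gamma> c] assms(4,6,7)
    by (simp add: D_def M_def u_def k_def)
  moreover have "0 \<le> \<gamma> * D"
    using \<open>0 \<le> \<gamma>\<close> by (simp add: D_def sum_nonneg)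
  ultimately have "norm M ^ 2 = 0" and D: "\<gamma> * D = 0"
    using zero_le_power2[of "norm M"] by linarith+
  then show "frame_operator x n = \<gamma> *\<^sub>R outer u u + k *\<^sub>R mat 1"
    by (simp add: M_def algebra_simps)
  show "\<forall>i<n. x i \<bullet> u = (u \<bullet> u) / n" if "\<gamma> \<noteq> 0"
  proof -
    have "\<forall>i\<in>{..<n}. (x i \<bullet> u - (u \<bullet> u) / n)^2 = 0"
      using D that by (simp add: D_def sum_nonneg_eq_0_iff)
    then show ?thesis by simp
  qed
qed

lemma sum_inner_shift_sq:
  fixes x :: "nat \<Rightarrow> 'a :: real_inner" and n :: nat and s :: real
  defines "u \<equiv> sum x {..<n}"
  shows "(\<Sum>i<n. (y \<bullet> (x i - s *\<^sub>R u))^2) = (\<Sum>i<n. (y \<bullet> x i)^2) - (2 * s - n * s^2) * (y \<bullet> u)^2"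
proof -
  have "(\<Sum>i<n. (y \<bullet> (x i - s *\<^sub>R u))^2)
      = (\<Sum>i<n. (y \<bullet> x i)^2 - 2 * s * (y \<bullet> u) * (y \<bullet> x i) + s^2 * (y \<bullet> u)^2)"
    by (intro sum.cong refl) (simp add: inner_diff_right power2_eq_square algebra_simps)
  also have "\<dots> = (\<Sum>i<n. (y \<bullet> x i)^2) - 2 * s * (y \<bullet> u) * (\<Sum>i<n. y \<bullet> x i) + n * s^2 * (y \<bullet> u)^2"
    by (simp add: sum.distrib sum_subtractf sum_distrib_left)
  also have "(\<Sum>i<n. y \<bullet> x i) = y \<bullet> u"
    by (simp add: u_def inner_sum_right)
  finally show ?thesis
    by (simp add: power2_eq_square algebra_simps)
qed

lemma inner_shift_shift:
  fixes x :: "nat \<Rightarrow> 'a :: real_inner" and n :: nat and s t :: real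
  defines "u \<equiv> sum x {..<n}"
  assumes "\<forall>i<n. x i \<bullet> u = t" and "i < n" and "j < n"
  shows "(x i - s *\<^sub>R u) \<bullet> (x j - s *\<^sub>R u) = x i \<bullet> x j - (2 * s - n * s^2) * t"
proof -
  have "u \<bullet> u = (\<Sum>i<n. x i \<bullet> u)"
    by (simp add: u_def inner_sum_left)
  also have "\<dots> = n * t"
    using assms(2) by simp
  finally have "u \<bullet> u = n * t" .
  moreover have "x i \<bullet> u = t" and "u \<bullet> x j = t"
    using assms(2-4) by (simp_all add: inner_commute)
  moreover have "(x i - s *\<^sub>R u) \<bullet> (x j - s *\<^sub>R u)
      = x i \<bullet> x j - s * (x i \<bullet> u) - s * (u \<bullet> x j) + s * s * (u \<bullet> u)"
    by (simp add: inner_diff_left inner_diff_right right_diff_distrib)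
  ultimately show ?thesis
    by (simp add: power2_eq_square algebra_simps)
qed

lemma tight_frame_shift:
  fixes x :: "nat \<Rightarrow> 'a :: real_inner" and n :: nat and \<gamma> k :: real
  defines "u \<equiv> sum x {..<n}"
  assumes frame: "\<forall>y. (\<Sum>i<n. (y \<bullet> x i)^2) = \<gamma> * (u \<bullet> y)^2 + k * (y \<bullet> y)"
    and const: "\<forall>i<n. x i \<bullet> u = (u \<bullet> u) / n" and "n > 0" and "0 \<le> k"
  obtains s where "\<forall>i<n. \<forall>j<n. (x i - s *\<^sub>R u) \<bullet> (x j - s *\<^sub>R u) = x i \<bullet> x j - \<gamma> * (u \<bullet> u) / n"
    and "\<forall>y. (\<Sum>i<n. (y \<bullet> (x i - s *\<^sub>R u))^2) = k * (y \<bullet> y)"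
proof (cases "u = 0")
  case True
  then show ?thesis
    using frame by (intro that[of 0]) simp_all
next
  case False
  then have "u \<bullet> u > 0"
    by simp
  have "(u \<bullet> u)^2 / n = (\<Sum>i<n. (u \<bullet> x i)^2)"
    using const \<open>n > 0\<close> by (simp add: inner_commute power2_eq_square)
  also have "\<dots> = \<gamma> * (u \<bullet> u)^2 + k * (u \<bullet> u)"
    using frame by simp
  \<comment> \<open>the frame identity at y = u bounds n \<gamma> by 1, so 2 s - n s^2 = \<gamma> has a real root\<close>
  finally have "\<gamma> * (u \<bullet> u)^2 \<le> (u \<bullet> u)^2 / n"
    using \<open>0 \<le> k\<close> \<open>u \<bullet> u > 0\<close> by simp
  then have "n * \<gamma> \<le> 1"
    using \<open>u \<bullet> u > 0\<close> \<open>n > 0\<close> by (simp add: field_simps)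
  define s where "s = (1 - sqrt (1 - n * \<gamma>)) / n"
  have "sqrt (1 - n * \<gamma>)^2 = 1 - n * \<gamma>"
    using \<open>n * \<gamma> \<le> 1\<close> by simp
  then have s: "2 * s - n * s^2 = \<gamma>"
    using \<open>n > 0\<close> by (simp add: s_def power2_eq_square field_simps)
  show ?thesis
  proof (rule that[of s])
    show "\<forall>i<n. \<forall>j<n. (x i - s *\<^sub>R u) \<bullet> (x j - s *\<^sub>R u) = x i \<bullet> x j - \<gamma> * (u \<bullet> u) / n"
      using inner_shift_shift[OF const[unfolded u_def], folded u_def] s by simp
    show "\<forall>y. (\<Sum>i<n. (y \<bullet> (x i - s *\<^sub>R u))^2) = k * (y \<bullet> y)"
      using frame s by (simp add: sum_inner_shift_sq[where x=x and n=n, folded u_def] inner_commute)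
  qed
qed

lemma tight_frame_shift_if_sum_gram_shift_sq_eq:
  fixes x :: "nat \<Rightarrow> real ^ 'd" and n :: nat and c :: real
  defines "u \<equiv> sum x {..<n}"
  assumes unit: "\<forall>i<n. x i \<bullet> x i = 1" and "n > 0" and "0 \<le> c" and "c < 1"
    and eq: "(\<Sum>i<n. \<Sum>j<n. (x i \<bullet> x j - c)^2) = (n * (1 - c))^2 / CARD('d)"
  obtains s where "\<forall>i<n. \<forall>j<n. (x i - s *\<^sub>R u) \<bullet> (x j - s *\<^sub>R u) = x i \<bullet> x j - c"
    and "\<forall>y. (\<Sum>i<n. (y \<bullet> (x i - s *\<^sub>R u))^2) = n * (1 - c) / CARD('d) * (y \<bullet> y)"
proof -
  define k where "k = n * (1 - c) / CARD('d)"
  define \<gamma> where "\<gamma> = (if c = 0 then 0 else c * n / (u \<bullet> u))"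
  have "u \<noteq> 0" if "c \<noteq> 0"
    using sum_gram_shift_sq_gt_if_sum_eq_0[OF unit \<open>n > 0\<close>, of c] that assms(4,5) eq
    by (auto simp: u_def)
  then have \<gamma>: "\<gamma> * (u \<bullet> u) = c * n" and "0 \<le> \<gamma>"
    using \<open>0 \<le> c\<close> by (simp_all add: \<gamma>_def)
  have "frame_operator x n = \<gamma> *\<^sub>R outer u u + k *\<^sub>R mat 1"
    and const: "\<gamma> \<noteq> 0 \<Longrightarrow> \<forall>i<n. x i \<bullet> u = (u \<bullet> u) / n"
    using frame_operator_eq_if_sum_gram_shift_sq_eq[OF unit \<open>n > 0\<close> \<open>0 \<le> \<gamma>\<close>] \<gamma> eq
    by (simp_all add: u_def k_def)
  then have frame: "\<forall>y. (\<Sum>i<n. (y \<bullet> x i)^2) = \<gamma> * (u \<bullet> y)^2 + k * (y \<bullet> y)"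
    using sum_inner_sq_eq_if_frame_operator_eq by blast
  show ?thesis
  proof (cases "\<gamma> = 0")
    case True
    then have "c = 0"
      using \<gamma> \<open>n > 0\<close> by simp
    then show ?thesis
      using frame True by (intro that[of 0]) (simp_all add: k_def)
  next
    case False
    have "0 \<le> k"
      using \<open>c < 1\<close> by (simp add: k_def)
    obtain s where "\<forall>i<n. \<forall>j<n. (x i - s *\<^sub>R u) \<bullet> (x j - s *\<^sub>R u) = x i \<bullet> x j - \<gamma> * (u \<bullet> u) / n"
      and "\<forall>y. (\<Sum>i<n. (y \<bullet> (x i - s *\<^sub>R u))^2) = k * (y \<bullet> y)"
      using tight_frame_shift[OF frame[unfolded u_def] const[OF False, unfolded u_def]
          \<open>n > 0\<close> \<open>0 \<le> k\<close>, folded u_def] by blast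
    then show ?thesis
      using \<gamma> \<open>n > 0\<close> by (intro that[of s]) (simp_all add: k_def)
  qed
qed

lemma sum_gram_shift_sq_equiangular:
  fixes x :: "nat \<Rightarrow> 'a :: real_inner" and n :: nat and c \<delta> :: real
  assumes unit: "\<forall>i<n. x i \<bullet> x i = 1"
    and angle: "\<forall>i<n. \<forall>j<n. i \<noteq> j \<longrightarrow> \<bar>x i \<bullet> x j - c\<bar> = \<delta>"
  shows "(\<Sum>i<n. \<Sum>j<n. (x i \<bullet> x j - c)^2) = n * (1 - c)^2 + n * (real n - 1) * \<delta>^2"
proof -
  have "(x i \<bullet> x j - c)^2 = \<delta>^2 + (if i = j then (1 - c)^2 - \<delta>^2 else 0)"
    if "i < n" "j < n" for i j
  proof (cases "i = j")
    case False
    then have "\<bar>x i \<bullet> x j - c\<bar> = \<delta>"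
      using angle that by blast
    then have "(x i \<bullet> x j - c)^2 = \<delta>^2"
      by (metis power2_abs)
    then show ?thesis
      using False by simp
  qed (use unit that in simp)
  then have "(\<Sum>i<n. \<Sum>j<n. (x i \<bullet> x j - c)^2)
      = (\<Sum>i<n. \<Sum>j<n. \<delta>^2 + (if i = j then (1 - c)^2 - \<delta>^2 else 0))"
    by (intro sum.cong refl) simp
  also have "\<dots> = (\<Sum>i<n. n * \<delta>^2 + ((1 - c)^2 - \<delta>^2))"
    by (intro sum.cong refl) (simp add: sum.distrib)
  also have "\<dots> = n * (1 - c)^2 + n * (real n - 1) * \<delta>^2"
    by (simp add: algebra_simps)
  finally show ?thesis .
qed

text \<open>With \<alpha> = \<delta> / (1 - c) one has L = 1 / \<alpha>^2, and m = d (1 - \<alpha>^2) / (1 - d \<alpha>^2) is the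
  relative bound for equiangular lines at angle \<alpha>.\<close>

lemma sum_gram_shift_sq_eq_if_relative_bound_eq:
  fixes c \<delta> L d m :: real
  assumes "(1 - c)^2 = \<delta>^2 * L" and "L \<noteq> d" and "d \<noteq> 0" and "m = d * (L - 1) / (L - d)"
  shows "m * (1 - c)^2 + m * (m - 1) * \<delta>^2 = (m * (1 - c))^2 / d"
proof -
  have "m * (L - d) = d * (L - 1)"
    using assms(2,4) by simp
  moreover have "d * (m * (1 - c)^2 + m * (m - 1) * \<delta>^2) - (m * (1 - c))^2
      = m * \<delta>^2 * (d * (L - 1) - m * (L - d))"
    unfolding power_mult_distrib assms(1) by (simp add: algebra_simps power2_eq_square)
  ultimately show ?thesis
    using assms(3) by (simp add: eq_divide_eq mult.commute)
qed

lemma equiangular_tight_frame_normalize: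
  fixes f :: "nat \<Rightarrow> real ^ 'd" and r e C :: real
  assumes "\<forall>i<n. f i \<bullet> f i = r" and "0 < r"
    and "\<forall>i<n. \<forall>j<n. i \<noteq> j \<longrightarrow> \<bar>f i \<bullet> f j\<bar> = e"
    and "\<forall>y. (\<Sum>i<n. (y \<bullet> f i)^2) = C * (y \<bullet> y)" and "0 < C"
  shows "equiangular_tight_frame (\<lambda>i. (1 / sqrt r) *\<^sub>R f i) n"
  unfolding equiangular_tight_frame_def
proof (intro conjI exI allI impI)
  show "norm ((1 / sqrt r) *\<^sub>R f i) = 1" if "i < n" for i
    using assms(1,2) that by (simp add: norm_eq_sqrt_inner real_sqrt_divide)
  show "\<bar>(1 / sqrt r) *\<^sub>R f i \<bullet> (1 / sqrt r) *\<^sub>R f j\<bar> = e / r"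
    if "i < n" "j < n" "i \<noteq> j" for i j
    using assms(2,3) that by (simp add: abs_mult)
  show "(\<Sum>i<n. (y \<bullet> (1 / sqrt r) *\<^sub>R f i)^2) = C / r * (norm y)^2" for y
    using assms(2,4) by (simp add: power_divide power2_norm_eq_inner flip: sum_divide_distrib)
  show "0 < C / r"
    using assms(2,5) by simp
qed

lemma two_distance_parameters:
  fixes a b :: real
  assumes "a < b" and "b < 1"
  shows "(1 - (a + b) / 2)^2 = ((b - a) / 2)^2 * ((a + b - 2) / (b - a))^2"
    and "1 < ((a + b - 2) / (b - a))^2"
proof -
  have "1 - (a + b) / 2 = (b - a) / 2 * - ((a + b - 2) / (b - a))"
    using assms(1) by (simp add: field_simps)
  then show "(1 - (a + b) / 2)^2 = ((b - a) / 2)^2 * ((a + b - 2) / (b - a))^2"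
    by (simp only: power_mult_distrib power2_minus)
  have "(a + b - 2) / (b - a) < -1"
    using assms by (simp add: pos_divide_less_eq)
  then have "1 < (- ((a + b - 2) / (b - a)))^2"
    by (intro one_less_power) auto
  then show "1 < ((a + b - 2) / (b - a))^2"
    by simp
qed

lemma two_distance_set_enumeration:
  fixes S :: "'a :: real_inner set" and a b :: real
  assumes "finite S" and "card S = n" and "\<forall>x\<in>S. norm x = 1"
    and "\<forall>x\<in>S. \<forall>y\<in>S. x \<noteq> y \<longrightarrow> x \<bullet> y \<in> {a, b}" and "a < b"
  obtains x :: "nat \<Rightarrow> 'a" where "\<forall>i<n. x i \<bullet> x i = 1"
    and "\<forall>i<n. \<forall>j<n. i \<noteq> j \<longrightarrow> \<bar>x i \<bullet> x j - (a + b) / 2\<bar> = (b - a) / 2"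
proof -
  obtain x where x: "bij_betw x {..<n} S"
    using assms(1,2) by (metis atLeast0LessThan ex_bij_betw_nat_finite)
  show ?thesis
  proof (rule that[of x])
    show "\<forall>i<n. x i \<bullet> x i = 1"
      using x assms(3) by (auto simp: bij_betw_def norm_eq_1)
    have "x i \<bullet> x j \<in> {a, b}" if "i < n" "j < n" "i \<noteq> j" for i j
      using x assms(4) that by (auto simp: bij_betw_def inj_on_def)
    then show "\<forall>i<n. \<forall>j<n. i \<noteq> j \<longrightarrow> \<bar>x i \<bullet> x j - (a + b) / 2\<bar> = (b - a) / 2"
      using \<open>a < b\<close> by (fastforce simp: abs_if field_simps)
  qed
qed

lemma ex_equiangular_tight_frame_if_sum_gram_shift_sq_eq:
  fixes x :: "nat \<Rightarrow> real ^ 'd" and n :: nat and c \<delta> :: real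
  assumes unit: "\<forall>i<n. x i \<bullet> x i = 1"
    and angle: "\<forall>i<n. \<forall>j<n. i \<noteq> j \<longrightarrow> \<bar>x i \<bullet> x j - c\<bar> = \<delta>"
    and "n > 0" and "0 \<le> c" and "c < 1"
    and eq: "(\<Sum>i<n. \<Sum>j<n. (x i \<bullet> x j - c)^2) = (n * (1 - c))^2 / CARD('d)"
  shows "\<exists>f :: nat \<Rightarrow> real ^ 'd. equiangular_tight_frame f n"
proof -
  obtain s where inner:
    "\<forall>i<n. \<forall>j<n. (x i - s *\<^sub>R sum x {..<n}) \<bullet> (x j - s *\<^sub>R sum x {..<n}) = x i \<bullet> x j - c"
    and frame: "\<forall>y. (\<Sum>i<n. (y \<bullet> (x i - s *\<^sub>R sum x {..<n}))^2) = n * (1 - c) / CARD('d) * (y \<bullet> y)"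
    by (rule tight_frame_shift_if_sum_gram_shift_sq_eq[OF unit \<open>n > 0\<close> \<open>0 \<le> c\<close> \<open>c < 1\<close> eq])
  define f where "f i = x i - s *\<^sub>R sum x {..<n}" for i
  have "equiangular_tight_frame (\<lambda>i. (1 / sqrt (1 - c)) *\<^sub>R f i) n"
  proof (rule equiangular_tight_frame_normalize)
    show "\<forall>i<n. f i \<bullet> f i = 1 - c"
      using inner unit by (simp add: f_def)
    show "\<forall>i<n. \<forall>j<n. i \<noteq> j \<longrightarrow> \<bar>f i \<bullet> f j\<bar> = \<delta>"
      using inner angle by (simp add: f_def)
    show "\<forall>y. (\<Sum>i<n. (y \<bullet> f i)^2) = n * (1 - c) / CARD('d) * (y \<bullet> y)"
      using frame by (simp add: f_def)
    show "0 < 1 - c" and "0 < n * (1 - c) / CARD('d)"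
      using \<open>n > 0\<close> \<open>c < 1\<close> by simp_all
  qed
  then show ?thesis
    by blast
qed

theorem mainTheorem11:
  fixes a b :: real and n :: nat
  assumes "-1 \<le> a" and "a < b" and "b < 1" and "a + b \<ge> 0"
    and "((a + b - 2) / (b - a))^2 \<noteq> real CARD('d)"
    and "real n = real CARD('d) * (((a + b - 2) / (b - a))^2 - 1)
                  / (((a + b - 2) / (b - a))^2 - real CARD('d))"
    and "\<exists>S :: (real ^ 'd) set. finite S \<and> card S = n \<and> (\<forall>x\<in>S. norm x = 1) \<and>
           (\<forall>x\<in>S. \<forall>y\<in>S. x \<noteq> y \<longrightarrow> x \<bullet> y \<in> {a, b})"
  shows "\<exists>f :: nat \<Rightarrow> real ^ 'd. equiangular_tight_frame f n"
proof -
  let ?c = "(a + b) / 2"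
  obtain x :: "nat \<Rightarrow> real ^ 'd" where unit: "\<forall>i<n. x i \<bullet> x i = 1"
    and angle: "\<forall>i<n. \<forall>j<n. i \<noteq> j \<longrightarrow> \<bar>x i \<bullet> x j - ?c\<bar> = (b - a) / 2"
    using assms(7) two_distance_set_enumeration assms(2) by metis
  have "n > 0"
    using assms(5,6) two_distance_parameters(2)[OF assms(2,3)] by (intro gr0I) auto
  moreover have "0 \<le> ?c" and "?c < 1"
    using assms(2-4) by simp_all
  moreover have "(\<Sum>i<n. \<Sum>j<n. (x i \<bullet> x j - ?c)^2) = (n * (1 - ?c))^2 / CARD('d)"
    using sum_gram_shift_sq_equiangular[OF unit angle]
      sum_gram_shift_sq_eq_if_relative_bound_eq[OF two_distance_parameters(1)[OF assms(2,3)]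
        assms(5) _ assms(6)]
    by simp
  ultimately show ?thesis
    by (rule ex_equiangular_tight_frame_if_sum_gram_shift_sq_eq[OF unit angle])
qed

end
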